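(* The group $$G = \langle x,y,z,w \mid x^8 = y^2 = z^8 = w^2 = 1,\ x^y = x^3,\ z^w = z^3,\ [x,z] = x^2z^2,\ [z,y] = x^4,\ [x,w] = z^4,\ [y,w] = 1\rangle$$ has order $256$, and it is an exact product $G = HK$ with $H = \langle x,y\rangle \cong \mathrm{SD}_{16}$, $K = \langle z, w\rangle\cong\mathrm{SD}_{16}$, $H\cap K = \{1\}$, in which $x, z$ have order $8$, $y,w$ have order $2$, $[x,z] = x^2z^2 \ne 1$, and the cores are $\langle x\rangle^G = \langle x^2\rangle$ and $\langle z\rangle^G = \langle z^2\rangle$, both of order $4$. In particular, there exists an exact product of two copies of $\mathrm{SD}_{16}$ with both cores non-trivial and $[x,z]\neq 1$.
   Context: Conventions: $[g,h] = g^{-1}h^{-1}gh$, $g^h = h^{-1}gh$. $\mathrm{SD}_{16} = \langle x,y\mid x^8 = y^2 = 1, x^y = x^3\rangle$ is the semidihedral group of order 16. The core $X^G$ of $X \le G$ is the intersection of all conjugates of $X$ in $G$. *)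

theory Defs
  imports "HOL-Algebra.Algebra"
begin

text \<open>Letters: a generator together with a flag; flag True means the inverse
of the generator. Words are lists of letters.\<close>

type_synonym 'g letter = "'g \<times> bool"
type_synonym 'g word = "'g letter list"

text \<open>Equality in the group presented by the relations R (a set of pairs (u,v)
standing for the relation u = v): the congruence on words generated by free
cancellation and the relations.\<close>

inductive pres_eq :: "('g word \<times> 'g word) set \<Rightarrow> 'g word \<Rightarrow> 'g word \<Rightarrow> bool"
  for R :: "('g word \<times> 'g word) set" where
  refl: "pres_eq R u u"
| sym: "pres_eq R u v \<Longrightarrow> pres_eq R v u"
| trans: "pres_eq R u v \<Longrightarrow> pres_eq R v w \<Longrightarrow> pres_eq R u w"
| cancel: "pres_eq R (a @ [(g, b), (g, \<not> b)] @ c) (a @ c)"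
| rel: "(u, v) \<in> R \<Longrightarrow> pres_eq R (a @ u @ c) (a @ v @ c)"

definition pres_class :: "('g word \<times> 'g word) set \<Rightarrow> 'g word \<Rightarrow> 'g word set" where
  "pres_class R w = Collect (pres_eq R w)"

definition presented_group :: "('g word \<times> 'g word) set \<Rightarrow> 'g word set monoid" where
  "presented_group R =
     \<lparr> carrier = range (pres_class R),
       monoid.mult = (\<lambda>A B. pres_class R ((SOME a. a \<in> A) @ (SOME b. b \<in> B))),
       one = pres_class R [] \<rparr>"

definition pres_gen :: "('g word \<times> 'g word) set \<Rightarrow> 'g \<Rightarrow> 'g word set" where
  "pres_gen R g = pres_class R [(g, False)]"

abbreviation gpow :: "'g \<Rightarrow> nat \<Rightarrow> 'g word" where
  "gpow g n \<equiv> replicate n (g, False)"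

abbreviation ginv :: "'g \<Rightarrow> 'g word" where
  "ginv g \<equiv> [(g, True)]"

datatype gen4 = gX | gY | gZ | gW
datatype gen2 = gA | gB

text \<open>Conventions: [g,h] = g^-1 h^-1 g h and g^h = h^-1 g h.\<close>

definition SD16_rels :: "(gen2 word \<times> gen2 word) set" where
  "SD16_rels =
    { (gpow gA 8, []),
      (gpow gB 2, []),
      (ginv gB @ [(gA, False)] @ [(gB, False)], gpow gA 3) }"

definition SD16 :: "gen2 word set monoid" where
  "SD16 = presented_group SD16_rels"

definition G_rels :: "(gen4 word \<times> gen4 word) set" where
  "G_rels =
    { (gpow gX 8, []),
      (gpow gY 2, []),
      (gpow gZ 8, []),
      (gpow gW 2, []),
      (ginv gY @ [(gX, False)] @ [(gY, False)], gpow gX 3),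
      (ginv gW @ [(gZ, False)] @ [(gW, False)], gpow gZ 3),
      (ginv gX @ ginv gZ @ [(gX, False)] @ [(gZ, False)], gpow gX 2 @ gpow gZ 2),
      (ginv gZ @ ginv gY @ [(gZ, False)] @ [(gY, False)], gpow gX 4),
      (ginv gX @ ginv gW @ [(gX, False)] @ [(gW, False)], gpow gZ 4),
      (ginv gY @ ginv gW @ [(gY, False)] @ [(gW, False)], []) }"

definition G6 :: "gen4 word set monoid" where
  "G6 = presented_group G_rels"

definition core :: "('a, 'b) monoid_scheme \<Rightarrow> 'a set \<Rightarrow> 'a set" where
  "core G S = carrier G \<inter> (\<Inter>g\<in>carrier G. {inv\<^bsub>G\<^esub> g \<otimes>\<^bsub>G\<^esub> h \<otimes>\<^bsub>G\<^esub> g | h. h \<in> S})"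

end

theory Submission
  imports Defs
begin

lemma pres_eq_context: "pres_eq R u v \<Longrightarrow> pres_eq R (p @ u @ q) (p @ v @ q)"
proof (induction rule: pres_eq.induct)
  case (cancel a g b c)
  show ?case using pres_eq.cancel[of R "p @ a" g b "c @ q"] by simp
next
  case (rel u v a c)
  show ?case using pres_eq.rel[OF rel, of "p @ a" "c @ q"] by simp
next
  case (sym u v)
  show ?case by (rule pres_eq.sym[OF sym.IH])
next
  case (trans u v w)
  show ?case by (rule pres_eq.trans[OF trans.IH])
qed (rule pres_eq.refl)

lemma pres_eq_append:
  assumes "pres_eq R u u'" and "pres_eq R v v'"
  shows "pres_eq R (u @ v) (u' @ v')"
proof (rule pres_eq.trans)
  show "pres_eq R (u @ v) (u' @ v)" using pres_eq_context[OF assms(1), of "[]" v] by simp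
  show "pres_eq R (u' @ v) (u' @ v')" using pres_eq_context[OF assms(2), of u' "[]"] by simp
qed

lemma pres_class_eq_iff: "pres_class R u = pres_class R v \<longleftrightarrow> pres_eq R u v"
proof
  assume "pres_class R u = pres_class R v"
  then show "pres_eq R u v" by (metis pres_class_def mem_Collect_eq pres_eq.refl)
next
  assume "pres_eq R u v"
  then show "pres_class R u = pres_class R v"
    unfolding pres_class_def
    by (auto dest: pres_eq.trans[OF pres_eq.sym] pres_eq.trans)
qed

lemma pres_eq_some_class: "pres_eq R u (SOME v. v \<in> pres_class R u)"
  by (metis pres_class_def mem_Collect_eq pres_eq.refl someI)

lemma pres_class_mult [simp]:
  "pres_class R u \<otimes>\<^bsub>presented_group R\<^esub> pres_class R v = pres_class R (u @ v)"
  unfolding presented_group_def pres_class_eq_iff monoid.simps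
  by (rule pres_eq_append; rule pres_eq.sym, rule pres_eq_some_class)

lemma presented_group_one: "\<one>\<^bsub>presented_group R\<^esub> = pres_class R []"
  by (simp add: presented_group_def)

lemma presented_group_carrier: "carrier (presented_group R) = range (pres_class R)"
  by (simp add: presented_group_def)

lemma pres_class_in_carrier [simp]: "pres_class R u \<in> carrier (presented_group R)"
  by (simp add: presented_group_carrier)

definition inv_word :: "'g word \<Rightarrow> 'g word" where
  "inv_word u = rev (map (\<lambda>(g, b). (g, \<not> b)) u)"

lemma inv_word_Cons [simp]: "inv_word ((g, b) # u) = inv_word u @ [(g, \<not> b)]"
  by (simp add: inv_word_def)

lemma inv_word_Nil [simp]: "inv_word [] = []"
  by (simp add: inv_word_def)

lemma pres_eq_inv_word_append: "pres_eq R (inv_word u @ u) []"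
proof (induction u)
  case Nil
  show ?case by (simp add: pres_eq.refl)
next
  case (Cons l u)
  obtain g b where l: "l = (g, b)" by fastforce
  have "pres_eq R (inv_word u @ [(g, \<not> b), (g, \<not> \<not> b)] @ u) (inv_word u @ u)"
    by (rule pres_eq.cancel)
  then show ?case using pres_eq.trans[OF _ Cons.IH] l by simp
qed

lemma group_presented_group: "group (presented_group R)"
proof (rule groupI)
  show "\<one>\<^bsub>presented_group R\<^esub> \<in> carrier (presented_group R)"
    by (simp add: presented_group_one)
next
  fix a b assume "a \<in> carrier (presented_group R)" "b \<in> carrier (presented_group R)"
  then show "a \<otimes>\<^bsub>presented_group R\<^esub> b \<in> carrier (presented_group R)"
    by (auto simp: presented_group_carrier)
next
  fix a b c assume "a \<in> carrier (presented_group R)" "b \<in> carrier (presented_group R)"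
    "c \<in> carrier (presented_group R)"
  then show "a \<otimes>\<^bsub>presented_group R\<^esub> b \<otimes>\<^bsub>presented_group R\<^esub> c =
      a \<otimes>\<^bsub>presented_group R\<^esub> (b \<otimes>\<^bsub>presented_group R\<^esub> c)"
    by (auto simp: presented_group_carrier)
next
  fix a assume "a \<in> carrier (presented_group R)"
  then show "\<one>\<^bsub>presented_group R\<^esub> \<otimes>\<^bsub>presented_group R\<^esub> a = a"
    by (auto simp: presented_group_carrier presented_group_one)
next
  fix a assume "a \<in> carrier (presented_group R)"
  then obtain u where "a = pres_class R u" by (auto simp: presented_group_carrier)
  then have "pres_class R (inv_word u) \<otimes>\<^bsub>presented_group R\<^esub> a = \<one>\<^bsub>presented_group R\<^esub>"
    by (simp add: presented_group_one pres_class_eq_iff pres_eq_inv_word_append)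
  then show "\<exists>b\<in>carrier (presented_group R). b \<otimes>\<^bsub>presented_group R\<^esub> a = \<one>\<^bsub>presented_group R\<^esub>"
    by (rule bexI[OF _ pres_class_in_carrier])
qed

lemma presented_group_inv:
  "inv\<^bsub>presented_group R\<^esub> (pres_class R u) = pres_class R (inv_word u)"
  by (rule group.inv_equality[OF group_presented_group])
    (simp_all add: presented_group_one pres_class_eq_iff pres_eq_inv_word_append)

lemma pres_class_rel: "(u, v) \<in> R \<Longrightarrow> pres_class R u = pres_class R v"
  using pres_eq.rel[of u v R "[]" "[]"] by (simp add: pres_class_eq_iff)

lemma pres_class_gen: "pres_class R [(g, False)] = pres_gen R g"
  by (simp add: pres_gen_def)

lemma pres_class_ginv: "pres_class R (ginv g) = inv\<^bsub>presented_group R\<^esub> pres_gen R g"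
  by (simp add: pres_gen_def presented_group_inv)

lemma pres_class_gpow: "pres_class R (gpow g n) = pres_gen R g [^]\<^bsub>presented_group R\<^esub> n"
proof (induction n)
  case (Suc n)
  have "gpow g (Suc n) = gpow g n @ [(g, False)]"
    by (simp add: replicate_append_same)
  then have "pres_class R (gpow g (Suc n)) = pres_class R (gpow g n) \<otimes>\<^bsub>presented_group R\<^esub> pres_gen R g"
    by (simp add: pres_gen_def)
  then show ?case by (simp add: Suc.IH)
qed (simp add: presented_group_one)

lemma pres_class_gen_pow:
  "pres_class R [(g, False)] [^]\<^bsub>presented_group R\<^esub> (n::nat) = pres_class R (gpow g n)"
  using pres_class_gpow[where R = R and g = g and n = n] by (simp add: pres_gen_def)

lemma pres_gen_in_carrier [simp]: "pres_gen R g \<in> carrier (presented_group R)"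
  by (simp add: pres_gen_def)

lemma generate_pres_gen:
  "generate (presented_group R) (range (pres_gen R)) = carrier (presented_group R)"
proof -
  interpret group "presented_group R" by (rule group_presented_group)
  have "pres_class R u \<in> generate (presented_group R) (range (pres_gen R))" for u
  proof (induction u)
    case Nil
    show ?case using generate.one by (metis presented_group_one)
  next
    case (Cons l u)
    obtain g b where l: "l = (g, b)" by fastforce
    have gen: "pres_gen R g \<in> generate (presented_group R) (range (pres_gen R))"
      by (rule generate.incl) simp
    have "pres_class R [l] \<in> generate (presented_group R) (range (pres_gen R))"
    proof (cases b)
      case True
      then have "pres_class R [l] = inv\<^bsub>presented_group R\<^esub> pres_gen R g"
        by (simp add: l pres_class_ginv)
      then show ?thesis using generate.inv[of "pres_gen R g" "range (pres_gen R)"] by simp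
    next
      case False
      then show ?thesis using gen by (simp add: l pres_class_gen)
    qed
    from generate.eng[OF this Cons.IH] show ?case by simp
  qed
  moreover have "generate (presented_group R) (range (pres_gen R)) \<subseteq> carrier (presented_group R)"
    using generate_in_carrier[of "range (pres_gen R)"] by fastforce
  ultimately show ?thesis by (auto simp: presented_group_carrier)
qed

lemma fold_action_closed:
  "p \<in> P \<Longrightarrow> (\<And>l q. q \<in> P \<Longrightarrow> act l q \<in> P) \<Longrightarrow> fold act u p \<in> P"
  by (induction u arbitrary: p) auto

lemma pres_eq_fold_action:
  assumes "pres_eq R u v" and "p \<in> P"
    and act_closed: "\<And>l q. q \<in> P \<Longrightarrow> act l q \<in> P"
    and act_cancel: "\<And>g b q. q \<in> P \<Longrightarrow> act (g, \<not> b) (act (g, b) q) = q"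
    and act_rels: "\<And>r s q. (r, s) \<in> R \<Longrightarrow> q \<in> P \<Longrightarrow> fold act r q = fold act s q"
  shows "fold act u p = fold act v p"
  using assms(1,2)
proof (induction arbitrary: p rule: pres_eq.induct)
  case (cancel a g b c)
  have "fold act a p \<in> P" using fold_action_closed[OF cancel act_closed] .
  then show ?case using act_cancel by simp
next
  case (rel r s a c)
  have "fold act a p \<in> P" using fold_action_closed[OF rel(2) act_closed] .
  then show ?case using act_rels[OF rel(1)] by simp
qed simp_all

context group
begin

lemma inv_mult_cancel_left [simp]:
  "x \<in> carrier G \<Longrightarrow> y \<in> carrier G \<Longrightarrow> inv x \<otimes> (x \<otimes> y) = y"
  by (simp flip: m_assoc)

lemma mult_inv_cancel_left [simp]:
  "x \<in> carrier G \<Longrightarrow> y \<in> carrier G \<Longrightarrow> x \<otimes> (inv x \<otimes> y) = y"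
  by (simp flip: m_assoc)

lemma pow_mult_left: "a \<in> carrier G \<Longrightarrow> g \<in> carrier G \<Longrightarrow> a [^] (m::nat) \<otimes> (a [^] (n::nat) \<otimes> g) = a [^] (m + n) \<otimes> g"
  by (simp add: nat_pow_mult flip: m_assoc)

lemma mult_pow_left: "a \<in> carrier G \<Longrightarrow> g \<in> carrier G \<Longrightarrow> a \<otimes> (a [^] (n::nat) \<otimes> g) = a [^] Suc n \<otimes> g"
  by (simp only: m_assoc[symmetric] nat_pow_Suc2 nat_pow_closed)

lemma inv_eq_pow: "a \<in> carrier G \<Longrightarrow> a [^] Suc n = \<one> \<Longrightarrow> inv a = a [^] n"
  by (rule inv_equality) (simp_all only: nat_pow_Suc[symmetric] nat_pow_closed)

lemma nat_pow_mod:
  assumes "a \<in> carrier G" and "a [^] n = \<one>"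
  shows "a [^] (m::nat) = a [^] (m mod n)"
proof -
  have "a [^] m = (a [^] n) [^] (m div n) \<otimes> a [^] (m mod n)"
    using assms(1) by (simp add: nat_pow_pow nat_pow_mult)
  then show ?thesis using assms by simp
qed

lemma subgroup_nat_pow_closed: "subgroup H G \<Longrightarrow> a \<in> H \<Longrightarrow> a [^] (n::nat) \<in> H"
  by (induction n) (auto intro: subgroup.one_closed subgroup.m_closed)

lemma conj_mult:
  assumes "a \<in> carrier G" "g \<in> carrier G" "h \<in> carrier G"
  shows "inv a \<otimes> (g \<otimes> h) \<otimes> a = (inv a \<otimes> g \<otimes> a) \<otimes> (inv a \<otimes> h \<otimes> a)"
  using assms by (simp add: m_assoc)

lemma conj_pow:
  assumes "a \<in> carrier G" "g \<in> carrier G"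
  shows "inv a \<otimes> g [^] (n::nat) \<otimes> a = (inv a \<otimes> g \<otimes> a) [^] n"
proof (induction n)
  case (Suc n)
  have "inv a \<otimes> g [^] Suc n \<otimes> a = (inv a \<otimes> g [^] n \<otimes> a) \<otimes> (inv a \<otimes> g \<otimes> a)"
    using assms conj_mult[of a "g [^] n" g] by simp
  then show ?case using Suc.IH by simp
qed (use assms in simp)

lemma conj_inv:
  assumes "a \<in> carrier G" "g \<in> carrier G"
  shows "inv a \<otimes> inv g \<otimes> a = inv (inv a \<otimes> g \<otimes> a)"
  using assms by (simp add: inv_mult_group m_assoc)

lemma ord_eq_two_power:
  assumes "a \<in> carrier G" and "a [^] (2 ^ Suc k :: nat) = \<one>" and "a [^] (2 ^ k :: nat) \<noteq> \<one>"
  shows "ord a = 2 ^ Suc k"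
proof -
  have "ord a dvd 2 ^ Suc k" using assms(1,2) pow_eq_id by blast
  then obtain i where i: "i \<le> Suc k" "ord a = 2 ^ i"
    using divides_primepow_nat[OF two_is_prime_nat] by blast
  have "\<not> i \<le> k"
    using assms(1,3) i pow_eq_id le_imp_power_dvd by metis
  then show ?thesis using i by (simp add: le_Suc_eq)
qed

lemma card_set_mult_eq:
  assumes H: "subgroup H G" and K: "subgroup K G" and HK: "H \<inter> K = {\<one>}"
  shows "card (H <#> K) = card H * card K"
proof -
  have "inj_on (\<lambda>(h, k). h \<otimes> k) (H \<times> K)"
  proof (rule inj_onI, clarify)
    fix h k h' k' assume hk: "h \<in> H" "k \<in> K" "h' \<in> H" "k' \<in> K" and eq: "h \<otimes> k = h' \<otimes> k'"
    have c: "h \<in> carrier G" "k \<in> carrier G" "h' \<in> carrier G" "k' \<in> carrier G"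
      using hk subgroup.mem_carrier[OF H] subgroup.mem_carrier[OF K] by auto
    have "inv h' \<otimes> h = k' \<otimes> inv k"
      using eq c by (metis inv_solve_left' inv_solve_right m_assoc m_closed inv_closed)
    moreover have "inv h' \<otimes> h \<in> H" "k' \<otimes> inv k \<in> K"
      using hk H K by (auto intro: subgroup.m_closed subgroup.m_inv_closed)
    ultimately have "inv h' \<otimes> h = \<one>" "k' \<otimes> inv k = \<one>" using HK by auto
    then show "h = h' \<and> k = k'"
      using c by (metis inv_equality inv_inv inv_closed)
  qed
  moreover have "H <#> K = (\<lambda>(h, k). h \<otimes> k) ` (H \<times> K)"
    by (auto simp: set_mult_def)
  ultimately show ?thesis by (simp add: card_image card_cartesian_product)
qed

lemma generate_subset_if_right_mult_closed:
  assumes S: "S \<subseteq> carrier G" "\<one> \<in> S" and A: "A \<subseteq> carrier G"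
    and closed: "\<And>s a. s \<in> S \<Longrightarrow> a \<in> A \<Longrightarrow> s \<otimes> a \<in> S"
    and periodic: "\<And>a. a \<in> A \<Longrightarrow> \<exists>n>0. a [^] (n::nat) = \<one>"
  shows "generate G A \<subseteq> S"
proof -
  have pow_closed: "s \<otimes> a [^] (n::nat) \<in> S" if s: "s \<in> S" and a: "a \<in> A" for s a n
  proof (induction n)
    case (Suc n)
    have "s \<otimes> a [^] Suc n = (s \<otimes> a [^] n) \<otimes> a"
      using s a S A by (simp add: m_assoc subset_iff)
    then show ?case using closed[OF Suc a] by simp
  qed (use s S in auto)
  have inv_closed: "s \<otimes> inv a \<in> S" if s: "s \<in> S" and a: "a \<in> A" for s a
  proof -
    obtain n :: nat where n: "n > 0" "a [^] n = \<one>" using periodic[OF a] by blast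
    have "a [^] (n - 1) \<otimes> a = a [^] Suc (n - 1)" by simp
    then have "inv a = a [^] (n - 1)"
      using n A a by (intro inv_equality) auto
    then show ?thesis using pow_closed[OF s a] by simp
  qed
  have "\<forall>s\<in>S. s \<otimes> t \<in> S" if "t \<in> generate G A" for t
    using that
  proof (induction rule: generate.induct)
    case (eng h1 h2)
    have "h1 \<in> carrier G" "h2 \<in> carrier G"
      using eng.hyps generate_in_carrier[OF A] by auto
    then show ?case using eng.IH S by (auto simp flip: m_assoc)
  qed (use S closed inv_closed in auto)
  then show ?thesis using S generate_in_carrier[OF A] by (metis l_one subsetI)
qed

lemma conj_in_generate:
  assumes g: "g \<in> carrier G" and B: "B \<subseteq> carrier G"
    and conj: "\<And>b. b \<in> B \<Longrightarrow> g \<otimes> b \<otimes> inv g \<in> generate G B"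
    and n: "n \<in> generate G B"
  shows "g \<otimes> n \<otimes> inv g \<in> generate G B"
  using n
proof (induction rule: generate.induct)
  case one
  show ?case using g generate.one by simp
next
  case (incl b)
  then show ?case by (rule conj)
next
  case (inv b)
  have "g \<otimes> inv b \<otimes> inv g = inv (g \<otimes> b \<otimes> inv g)"
    using g inv B by (auto simp: inv_mult_group m_assoc)
  then show ?case
    using subgroup.m_inv_closed[OF generate_is_subgroup[OF B] conj[OF inv]] by simp
next
  case (eng n1 n2)
  have "n1 \<in> carrier G" "n2 \<in> carrier G" using eng.hyps generate_in_carrier[OF B] by auto
  then have "g \<otimes> (n1 \<otimes> n2) \<otimes> inv g = (g \<otimes> n1 \<otimes> inv g) \<otimes> (g \<otimes> n2 \<otimes> inv g)"
    using g by (simp add: m_assoc)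
  then show ?case
    using subgroup.m_closed[OF generate_is_subgroup[OF B] eng.IH] by simp
qed

lemma normal_generate_if_conj_closed:
  assumes A: "A \<subseteq> carrier G" "generate G A = carrier G" and B: "B \<subseteq> carrier G"
    and conj: "\<And>a b. a \<in> A \<Longrightarrow> b \<in> B \<Longrightarrow> a \<otimes> b \<otimes> inv a \<in> generate G B"
    and conj_inv: "\<And>a b. a \<in> A \<Longrightarrow> b \<in> B \<Longrightarrow> inv a \<otimes> b \<otimes> a \<in> generate G B"
  shows "generate G B \<lhd> G"
proof -
  let ?N = "generate G B"
  have N: "?N \<subseteq> carrier G" using generate_in_carrier[OF B] by blast
  define C where "C = {g \<in> carrier G. \<forall>n\<in>?N. g \<otimes> n \<otimes> inv g \<in> ?N \<and> inv g \<otimes> n \<otimes> g \<in> ?N}"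
  have "subgroup C G"
  proof (rule subgroupI)
    show "C \<subseteq> carrier G" by (auto simp: C_def)
    have "\<one> \<in> C" using N by (auto simp: C_def subset_iff)
    then show "C \<noteq> {}" by blast
  next
    fix g assume "g \<in> C"
    then show "inv g \<in> C" by (simp add: C_def)
  next
    fix g h assume g: "g \<in> C" and h: "h \<in> C"
    have "g \<otimes> h \<otimes> n \<otimes> inv (g \<otimes> h) = g \<otimes> (h \<otimes> n \<otimes> inv h) \<otimes> inv g"
      "inv (g \<otimes> h) \<otimes> n \<otimes> (g \<otimes> h) = inv h \<otimes> (inv g \<otimes> n \<otimes> g) \<otimes> h" if "n \<in> ?N" for n
      using g h that N by (auto simp: C_def m_assoc inv_mult_group)
    then show "g \<otimes> h \<in> C" using g h by (simp add: C_def)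
  qed
  moreover have "A \<subseteq> C"
  proof
    fix a assume a: "a \<in> A"
    have "a \<otimes> n \<otimes> inv a \<in> ?N" if "n \<in> ?N" for n
      using a A by (intro conj_in_generate[OF _ B _ that] conj) auto
    moreover have "inv a \<otimes> n \<otimes> inv (inv a) \<in> ?N" if "n \<in> ?N" for n
      using a A by (intro conj_in_generate[OF _ B _ that]) (auto simp: conj_inv subset_iff)
    ultimately show "a \<in> C" using a A by (auto simp: C_def)
  qed
  ultimately have "carrier G \<subseteq> C" using A generate_subgroup_incl by metis
  then show ?thesis
    using generate_is_subgroup[OF B] by (auto simp: normal_inv_iff C_def)
qed

lemma core_eq_normal_subgroup:
  assumes N: "N \<lhd> G" and NS: "N \<subseteq> S" and S: "S \<subseteq> carrier G"
    and moved: "\<And>s. s \<in> S \<Longrightarrow> s \<notin> N \<Longrightarrow> \<exists>g\<in>carrier G. g \<otimes> s \<otimes> inv g \<notin> S"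
  shows "core G S = N"
proof
  show "N \<subseteq> core G S"
  proof
    fix n assume n: "n \<in> N"
    have "n = inv g \<otimes> (g \<otimes> n \<otimes> inv g) \<otimes> g" if "g \<in> carrier G" for g
      using that n NS S by (auto simp: m_assoc)
    moreover have "g \<otimes> n \<otimes> inv g \<in> S" if "g \<in> carrier G" for g
      using that n NS normal.inv_op_closed2[OF N] by auto
    ultimately show "n \<in> core G S"
      using n NS S unfolding core_def by blast
  qed
next
  show "core G S \<subseteq> N"
  proof
    fix t assume t: "t \<in> core G S"
    then have "t \<in> carrier G" by (simp add: core_def)
    have t_conj: "\<exists>h\<in>S. t = inv g \<otimes> h \<otimes> g" if "g \<in> carrier G" for g
      using t that unfolding core_def by blast
    obtain h where "h \<in> S" "t = inv \<one> \<otimes> h \<otimes> \<one>" using t_conj[OF one_closed] by blast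
    then have "t \<in> S" using S by auto
    show "t \<in> N"
    proof (rule ccontr)
      assume "t \<notin> N"
      then obtain g where g: "g \<in> carrier G" "g \<otimes> t \<otimes> inv g \<notin> S"
        using moved[OF \<open>t \<in> S\<close>] by blast
      obtain h where "h \<in> S" "t = inv g \<otimes> h \<otimes> g" using t_conj[OF g(1)] by blast
      then have "g \<otimes> t \<otimes> inv g = h" using g(1) S by (auto simp: m_assoc)
      then show False using g(2) \<open>h \<in> S\<close> by simp
    qed
  qed
qed

lemma core_generate_eq_generate_sq:
  assumes a: "a \<in> carrier G" and ord: "ord a \<noteq> 0" and g: "g \<in> carrier G"
    and normal: "generate G {a [^] (2::nat)} \<lhd> G"
    and conj_odd: "\<And>k. odd k \<Longrightarrow> g \<otimes> a [^] (k::nat) \<otimes> inv g = a [^] k \<otimes> c"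
    and c: "c \<in> carrier G" "c \<notin> generate G {a}"
  shows "core G (generate G {a}) = generate G {a [^] (2::nat)}"
proof (rule core_eq_normal_subgroup[OF normal])
  have pow: "a [^] (n::nat) \<in> generate G {a}" for n
    using a by (intro subgroup_nat_pow_closed[OF generate_is_subgroup]) (auto intro: generate.incl)
  show "generate G {a [^] (2::nat)} \<subseteq> generate G {a}"
    using pow a by (intro generate_subgroup_incl generate_is_subgroup) auto
  show "generate G {a} \<subseteq> carrier G"
    using generate_in_carrier[of "{a}"] a by blast
  fix s assume "s \<in> generate G {a}" and s_notin: "s \<notin> generate G {a [^] (2::nat)}"
  then obtain k :: nat where s: "s = a [^] k" using generate_pow_nat[OF a ord] by blast
  have "odd k"
  proof
    assume "even k"
    then have "s = (a [^] (2::nat)) [^] (k div 2)" using a by (simp add: s nat_pow_pow)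
    then show False
      using s_notin a by (metis subgroup_nat_pow_closed[OF generate_is_subgroup] generate.incl
          singletonI empty_subsetI insert_subset nat_pow_closed)
  qed
  show "\<exists>g\<in>carrier G. g \<otimes> s \<otimes> inv g \<notin> generate G {a}"
  proof (intro bexI[OF _ g] notI)
    assume "g \<otimes> s \<otimes> inv g \<in> generate G {a}"
    then have "inv (a [^] k) \<otimes> (a [^] k \<otimes> c) \<in> generate G {a}"
      using conj_odd[OF \<open>odd k\<close>] pow
      by (simp add: s subgroup.m_closed[OF generate_is_subgroup] subgroup.m_inv_closed[OF generate_is_subgroup] a)
    then show False using c a by simp
  qed
qed

end

definition eval_word :: "('a, 'm) monoid_scheme \<Rightarrow> ('g \<Rightarrow> 'a) \<Rightarrow> 'g word \<Rightarrow> 'a" where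
  "eval_word G e u = foldr (\<lambda>(g, b) a. (if b then inv\<^bsub>G\<^esub> e g else e g) \<otimes>\<^bsub>G\<^esub> a) u \<one>\<^bsub>G\<^esub>"

context group
begin

lemma eval_word_Nil [simp]: "eval_word G e [] = \<one>"
  by (simp add: eval_word_def)

lemma eval_word_Cons [simp]:
  "eval_word G e ((g, b) # u) = (if b then inv e g else e g) \<otimes> eval_word G e u"
  by (simp add: eval_word_def)

lemma eval_word_closed [simp]: "range e \<subseteq> carrier G \<Longrightarrow> eval_word G e u \<in> carrier G"
  by (induction u) (auto simp: image_subset_iff)

lemma eval_word_append:
  "range e \<subseteq> carrier G \<Longrightarrow> eval_word G e (u @ v) = eval_word G e u \<otimes> eval_word G e v"
  by (induction u) (auto simp: m_assoc image_subset_iff)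

lemma eval_word_respects_pres_eq:
  assumes e: "range e \<subseteq> carrier G"
    and rels: "\<And>r s. (r, s) \<in> R \<Longrightarrow> eval_word G e r = eval_word G e s"
    and "pres_eq R u v"
  shows "eval_word G e u = eval_word G e v"
  using assms(3)
proof (induction rule: pres_eq.induct)
  case (cancel a g b c)
  have "e g \<in> carrier G" using e by auto
  then show ?case using e by (simp add: eval_word_append m_assoc flip: m_assoc[of "inv e g"] m_assoc[of "e g"])
next
  case (rel r s a c)
  then show ?case using e rels by (simp add: eval_word_append)
qed simp_all

definition eval_class :: "('g \<Rightarrow> 'a) \<Rightarrow> 'g word set \<Rightarrow> 'a" where
  "eval_class e A = eval_word G e (SOME u. u \<in> A)"

lemma eval_class_pres_class:
  assumes "range e \<subseteq> carrier G" and "\<And>r s. (r, s) \<in> R \<Longrightarrow> eval_word G e r = eval_word G e s"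
  shows "eval_class e (pres_class R u) = eval_word G e u"
  unfolding eval_class_def
  using eval_word_respects_pres_eq[OF assms pres_eq.sym[OF pres_eq_some_class]] .

lemma eval_class_hom:
  assumes e: "range e \<subseteq> carrier G" and rels: "\<And>r s. (r, s) \<in> R \<Longrightarrow> eval_word G e r = eval_word G e s"
  shows "eval_class e \<in> hom (presented_group R) G"
proof (rule homI)
  fix A assume "A \<in> carrier (presented_group R)"
  then show "eval_class e A \<in> carrier G"
    using e by (auto simp: presented_group_carrier eval_class_pres_class[OF e rels])
next
  fix A B assume "A \<in> carrier (presented_group R)" "B \<in> carrier (presented_group R)"
  then show "eval_class e (A \<otimes>\<^bsub>presented_group R\<^esub> B) = eval_class e A \<otimes> eval_class e B"
    using e by (auto simp: presented_group_carrier eval_class_pres_class[OF e rels] eval_word_append)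
qed

lemma eval_class_image:
  assumes e: "range e \<subseteq> carrier G" and rels: "\<And>r s. (r, s) \<in> R \<Longrightarrow> eval_word G e r = eval_word G e s"
  shows "eval_class e ` carrier (presented_group R) = generate G (range e)"
proof -
  have "eval_word G e u \<in> generate G (range e)" for u
  proof (induction u)
    case (Cons l u)
    obtain g b where l: "l = (g, b)" by fastforce
    have "(if b then inv e g else e g) \<in> generate G (range e)"
      by (auto intro: generate.incl generate.inv)
    then show ?case using generate.eng[OF _ Cons.IH] by (simp add: l)
  qed (simp add: generate.one)
  moreover have "g \<in> range (eval_word G e)" if "g \<in> generate G (range e)" for g
    using that
  proof (induction rule: generate.induct)
    case one
    show ?case using eval_word_Nil by (metis rangeI)
  next
    case (incl h)
    then obtain g where "h = e g" by blast
    then have "h = eval_word G e [(g, False)]" using e by (auto simp: image_subset_iff)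
    then show ?case by blast
  next
    case (inv h)
    then obtain g where "h = e g" by blast
    then have "inv h = eval_word G e [(g, True)]" using e by (auto simp: image_subset_iff)
    then show ?case by blast
  next
    case (eng h1 h2)
    then obtain u v where "h1 = eval_word G e u" "h2 = eval_word G e v" by blast
    then have "h1 \<otimes> h2 = eval_word G e (u @ v)" by (simp add: eval_word_append[OF e])
    then show ?case by blast
  qed
  moreover have "eval_class e ` carrier (presented_group R) = range (eval_word G e)"
    by (auto simp: presented_group_carrier eval_class_pres_class[OF e rels] image_image)
  ultimately show ?thesis by auto
qed

lemma SD16_relations_generate_subset:
  assumes a: "a \<in> carrier G" and b: "b \<in> carrier G"
    and a8: "a [^] (8::nat) = \<one>" and b2: "b [^] (2::nat) = \<one>"
    and ba: "inv b \<otimes> a \<otimes> b = a [^] (3::nat)"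
  shows "generate G {a, b} \<subseteq> (\<lambda>(i, j). a [^] i \<otimes> b [^] j) ` ({..<8::nat} \<times> {..<2::nat})"
    (is "_ \<subseteq> ?S")
proof (rule generate_subset_if_right_mult_closed)
  have bb: "b \<otimes> b = \<one>" using b2 b by (simp add: numeral_2_eq_2)
  then have "inv b = b" using b by (simp add: inv_equality)
  then have ba': "b \<otimes> a = a [^] (3::nat) \<otimes> b"
    using ba a b bb by (metis m_assoc m_closed r_one)
  have in_S: "a [^] i \<otimes> b [^] j \<in> ?S" if "j < 2" for i j :: nat
    using that nat_pow_mod[OF a a8, of i] by (auto intro!: image_eqI[of _ _ "(i mod 8, j)"])
  fix s c assume "s \<in> ?S" and "c \<in> {a, b}"
  then obtain i j :: nat where s: "s = a [^] i \<otimes> b [^] j" and "j < 2" by auto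
  then consider "j = 0" | "j = 1" by linarith
  then show "s \<otimes> c \<in> ?S"
  proof cases
    case 1
    then show ?thesis using \<open>c \<in> {a, b}\<close> in_S[of 0 "Suc i"] in_S[of 1 i] s a b
      by (auto simp: m_assoc)
  next
    case 2
    have "s \<otimes> a = a [^] (i + 3) \<otimes> b [^] (1::nat)"
      using s 2 ba' a b by (simp add: m_assoc nat_pow_mult[symmetric])
    moreover have "s \<otimes> b = a [^] i \<otimes> b [^] (0::nat)"
      using s 2 bb a b by (simp add: m_assoc)
    ultimately show ?thesis using \<open>c \<in> {a, b}\<close> in_S[of 1 "i + 3"] in_S[of 0 i] by auto
  qed
qed (use a b a8 b2 in \<open>auto intro: exI[of _ 8] exI[of _ 2] intro!: image_eqI[of _ _ "(0, 0)"]\<close>)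

lemma eval_word_gpow: "eval_word G e (gpow g n) = e g [^] (n::nat)"
  if "e g \<in> carrier G"
  using that by (induction n) (simp_all add: nat_pow_Suc2[symmetric])

end

lemma group_SD16: "group SD16"
  unfolding SD16_def by (rule group_presented_group)

lemma finite_card_SD16: "finite (carrier SD16) \<and> card (carrier SD16) \<le> 16"
proof -
  interpret SD16: group SD16 by (rule group_SD16)
  let ?a = "pres_gen SD16_rels gA" and ?b = "pres_gen SD16_rels gB"
  have "UNIV = {gA, gB}" using gen2.exhaust by blast
  then have "range (pres_gen SD16_rels) = {?a, ?b}" by (metis image_empty image_insert)
  then have "carrier SD16 = generate SD16 {?a, ?b}"
    using generate_pres_gen[of SD16_rels] by (simp add: SD16_def)
  also have "\<dots> \<subseteq> (\<lambda>(i, j). ?a [^]\<^bsub>SD16\<^esub> i \<otimes>\<^bsub>SD16\<^esub> ?b [^]\<^bsub>SD16\<^esub> j) ` ({..<8::nat} \<times> {..<2::nat})"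
  proof (rule SD16.SD16_relations_generate_subset)
    have "pres_class SD16_rels (gpow gA 8) = pres_class SD16_rels []"
      "pres_class SD16_rels (gpow gB 2) = pres_class SD16_rels []"
      "pres_class SD16_rels (ginv gB @ [(gA, False)] @ [(gB, False)]) = pres_class SD16_rels (gpow gA 3)"
      by (rule pres_class_rel, simp add: SD16_rels_def)+
    then show "?a [^]\<^bsub>SD16\<^esub> (8::nat) = \<one>\<^bsub>SD16\<^esub>" "?b [^]\<^bsub>SD16\<^esub> (2::nat) = \<one>\<^bsub>SD16\<^esub>"
      "inv\<^bsub>SD16\<^esub> ?b \<otimes>\<^bsub>SD16\<^esub> ?a \<otimes>\<^bsub>SD16\<^esub> ?b = ?a [^]\<^bsub>SD16\<^esub> (3::nat)"
      by (simp_all add: SD16_def pres_class_gen_pow presented_group_one presented_group_inv pres_gen_def)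
  qed (simp_all add: SD16_def)
  finally have sub: "carrier SD16 \<subseteq> (\<lambda>(i, j). ?a [^]\<^bsub>SD16\<^esub> i \<otimes>\<^bsub>SD16\<^esub> ?b [^]\<^bsub>SD16\<^esub> j) ` ({..<8::nat} \<times> {..<2::nat})" .
  have "card ((\<lambda>(i, j). ?a [^]\<^bsub>SD16\<^esub> i \<otimes>\<^bsub>SD16\<^esub> ?b [^]\<^bsub>SD16\<^esub> j) ` ({..<8::nat} \<times> {..<2::nat})) \<le> 16"
    using card_image_le[of "{..<8::nat} \<times> {..<2::nat}"] by (simp add: card_cartesian_product)
  then show ?thesis
    using sub card_mono[OF _ sub] finite_subset[OF sub] by simp
qed

context group
begin

lemma iso_SD16_if_card:
  assumes a: "a \<in> carrier G" and b: "b \<in> carrier G"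
    and a8: "a [^] (8::nat) = \<one>" and b2: "b [^] (2::nat) = \<one>"
    and ba: "inv b \<otimes> a \<otimes> b = a [^] (3::nat)"
    and card16: "card (generate G {a, b}) = 16"
  shows "G\<lparr>carrier := generate G {a, b}\<rparr> \<cong> SD16"
proof -
  define e where "e = (\<lambda>g. case g of gA \<Rightarrow> a | gB \<Rightarrow> b)"
  have "UNIV = {gA, gB}" using gen2.exhaust by blast
  then have range_e: "range e = {a, b}" by (metis e_def gen2.simps(3,4) image_empty image_insert)
  then have e: "range e \<subseteq> carrier G" using a b by simp
  have rels: "eval_word G e r = eval_word G e s" if "(r, s) \<in> SD16_rels" for r s
    using that a b a8 b2 ba by (auto simp: SD16_rels_def e_def eval_word_gpow m_assoc)
  let ?h = "eval_class e"
  have hom: "?h \<in> hom SD16 G" and img: "?h ` carrier SD16 = generate G {a, b}"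
    using eval_class_hom[OF e rels] eval_class_image[OF e rels] range_e by (simp_all add: SD16_def)
  then have "?h \<in> hom SD16 (G\<lparr>carrier := generate G {a, b}\<rparr>)"
    by (auto simp: hom_def)
  moreover have "inj_on ?h (carrier SD16)"
    using finite_card_SD16 card16 img card_image_le[of "carrier SD16" ?h]
    by (intro eq_card_imp_inj_on) auto
  ultimately have "?h \<in> iso SD16 (G\<lparr>carrier := generate G {a, b}\<rparr>)"
    using img by (simp add: iso_def bij_betw_def)
  then show ?thesis
    by (intro group.iso_sym[OF group_SD16] is_isoI)
qed

end

locale G6_relations = group G for G (structure) +
  fixes x y z w
  assumes generators_closed [simp]:
      "x \<in> carrier G" "y \<in> carrier G" "z \<in> carrier G" "w \<in> carrier G"
    and x_order: "x [^] (8::nat) = \<one>" and y_order: "y [^] (2::nat) = \<one>"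
    and z_order: "z [^] (8::nat) = \<one>" and w_order: "w [^] (2::nat) = \<one>"
    and y_conj_x: "inv y \<otimes> x \<otimes> y = x [^] (3::nat)"
    and w_conj_z: "inv w \<otimes> z \<otimes> w = z [^] (3::nat)"
    and comm_x_z: "inv x \<otimes> inv z \<otimes> x \<otimes> z = x [^] (2::nat) \<otimes> z [^] (2::nat)"
    and comm_z_y: "inv z \<otimes> inv y \<otimes> z \<otimes> y = x [^] (4::nat)"
    and comm_x_w: "inv x \<otimes> inv w \<otimes> x \<otimes> w = z [^] (4::nat)"
    and comm_y_w: "inv y \<otimes> inv w \<otimes> y \<otimes> w = \<one>"
begin

lemma x_pow_mod: "x [^] (n::nat) = x [^] (n mod 8)"
  by (rule nat_pow_mod[OF _ x_order]) simp

lemma x_pow_reduce: "8 \<le> n \<Longrightarrow> x [^] n = x [^] (n - 8 :: nat)"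
  using x_pow_mod[of n] x_pow_mod[of "n - 8"] by (simp add: le_mod_geq)

lemma z_pow_reduce: "8 \<le> n \<Longrightarrow> z [^] n = z [^] (n - 8 :: nat)"
  using nat_pow_mod[OF _ z_order, of n] nat_pow_mod[OF _ z_order, of "n - 8"] by (simp add: le_mod_geq)

lemma inv_x: "inv x = x [^] (7::nat)"
  using x_order by (intro inv_eq_pow) simp_all

lemma inv_z: "inv z = z [^] (7::nat)"
  using z_order by (intro inv_eq_pow) simp_all

lemma inv_y: "inv y = y"
  using y_order by (intro inv_equality) (simp_all add: numeral_2_eq_2)

lemma inv_w: "inv w = w"
  using w_order by (intro inv_equality) (simp_all add: numeral_2_eq_2)

lemma w_w: "w \<otimes> w = \<one>"
  using w_order by (simp add: numeral_2_eq_2)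

lemma inv_x_pow_4: "inv (x [^] (4::nat)) = x [^] (4::nat)"
  using x_order by (intro inv_equality) (simp_all add: nat_pow_mult)

lemma inv_z_sq: "inv (z [^] (2::nat)) = z [^] (6::nat)"
  using z_order by (intro inv_equality) (simp_all add: nat_pow_mult)

lemma y_conj_z: "inv y \<otimes> z \<otimes> y = z \<otimes> x [^] (4::nat)"
proof -
  have "z \<otimes> (inv z \<otimes> inv y \<otimes> z \<otimes> y) = inv y \<otimes> z \<otimes> y"
    by (simp add: m_assoc)
  then show ?thesis using comm_z_y by simp
qed

lemma w_conj_x: "inv w \<otimes> x \<otimes> w = x \<otimes> z [^] (4::nat)"
proof -
  have "x \<otimes> (inv x \<otimes> inv w \<otimes> x \<otimes> w) = inv w \<otimes> x \<otimes> w"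
    by (simp add: m_assoc)
  then show ?thesis using comm_x_w by simp
qed

lemma w_y_comm: "w \<otimes> y = y \<otimes> w"
proof -
  have "inv (w \<otimes> y) \<otimes> (y \<otimes> w) = \<one>"
    using comm_y_w by (simp add: inv_mult_group m_assoc)
  moreover have "y \<otimes> w = (w \<otimes> y) \<otimes> (inv (w \<otimes> y) \<otimes> (y \<otimes> w))"
    by (simp add: m_assoc inv_mult_group)
  ultimately show ?thesis by simp
qed

lemma w_mult_x: "w \<otimes> x = x \<otimes> (z [^] (4::nat) \<otimes> w)"
proof -
  have "w \<otimes> x = (inv w \<otimes> x \<otimes> w) \<otimes> inv w"
    by (simp add: m_assoc inv_w w_w)
  also have "\<dots> = x \<otimes> z [^] (4::nat) \<otimes> inv w"
    by (simp only: w_conj_x)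
  finally show ?thesis by (simp add: m_assoc inv_w)
qed

lemma z_inv_x_z_inv: "inv z \<otimes> x \<otimes> inv z = x [^] (3::nat)"
proof -
  have "inv z \<otimes> x \<otimes> inv z = x \<otimes> (inv x \<otimes> inv z \<otimes> x \<otimes> z) \<otimes> (inv z \<otimes> inv z)"
    by (simp add: m_assoc)
  also have "\<dots> = x \<otimes> (x [^] (2::nat) \<otimes> z [^] (2::nat)) \<otimes> (inv z \<otimes> inv z)"
    by (simp only: comm_x_z)
  also have "\<dots> = x [^] (3::nat)"
    by (simp add: m_assoc numeral_3_eq_3 numeral_2_eq_2)
  finally show ?thesis .
qed

lemma z_x_z: "z \<otimes> x \<otimes> z = x [^] (3::nat)"
proof -
  have "inv y \<otimes> (inv z \<otimes> x \<otimes> inv z) \<otimes> y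
      = (inv y \<otimes> inv z \<otimes> y) \<otimes> (inv y \<otimes> x \<otimes> y) \<otimes> (inv y \<otimes> inv z \<otimes> y)"
    by (simp add: m_assoc)
  also have "\<dots> = x [^] (4::nat) \<otimes> inv z \<otimes> x [^] (3::nat) \<otimes> (x [^] (4::nat) \<otimes> inv z)"
    by (simp only: conj_inv y_conj_z y_conj_x inv_mult_group inv_x_pow_4 generators_closed
        nat_pow_closed inv_closed m_closed)
  finally have conj: "x [^] (4::nat) \<otimes> inv z \<otimes> x [^] (3::nat) \<otimes> (x [^] (4::nat) \<otimes> inv z) = x"
    using conj_pow[of y x 3] by (simp add: z_inv_x_z_inv y_conj_x nat_pow_pow x_pow_reduce)
  have "inv z \<otimes> inv x \<otimes> inv z
      = x [^] (4::nat) \<otimes> (x [^] (4::nat) \<otimes> inv z \<otimes> x [^] (3::nat) \<otimes> (x [^] (4::nat) \<otimes> inv z))"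
    by (simp add: m_assoc pow_mult_left x_order inv_x)
  then have "inv z \<otimes> inv x \<otimes> inv z = x [^] (4::nat) \<otimes> x"
    by (simp only: conj)
  then have "inv (z \<otimes> x \<otimes> z) = x [^] (5::nat)"
    by (simp add: inv_mult_group m_assoc nat_pow_Suc[symmetric] del: nat_pow_Suc)
  moreover have "inv (x [^] (5::nat)) = x [^] (3::nat)"
    using x_order by (intro inv_equality) (simp_all add: nat_pow_mult)
  ultimately show ?thesis
    by (metis inv_inv m_closed generators_closed(1,3))
qed

lemma z_mult_x: "s \<in> {z, inv z} \<Longrightarrow> s \<otimes> x = x [^] (3::nat) \<otimes> inv s"
proof -
  have "z \<otimes> x = z \<otimes> x \<otimes> z \<otimes> inv z" "inv z \<otimes> x = inv z \<otimes> x \<otimes> inv z \<otimes> z"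
    by (simp_all add: m_assoc)
  then show "s \<in> {z, inv z} \<Longrightarrow> ?thesis" using z_x_z z_inv_x_z_inv by auto
qed

lemma z_mult_x_pow: "s \<in> {z, inv z} \<Longrightarrow> s \<otimes> x [^] (n::nat) = x [^] (3 * n) \<otimes> (if even n then s else inv s)"
proof (induction n arbitrary: s)
  case (Suc n)
  define t where "t = (if even n then s else inv s)"
  have t: "t \<in> {z, inv z}" and "inv t = (if even (Suc n) then s else inv s)"
    using Suc.prems by (auto simp: t_def)
  have s: "s \<in> carrier G" using Suc.prems by auto
  have "s \<otimes> x [^] Suc n = x [^] (3 * n) \<otimes> (t \<otimes> x)"
    using Suc.IH[OF Suc.prems] s t by (auto simp: t_def m_assoc simp flip: m_assoc[of s])
  also have "\<dots> = x [^] (3 * Suc n) \<otimes> inv t"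
    using z_mult_x[OF t] t by (auto simp: pow_mult_left add.commute)
  finally show ?case using \<open>inv t = _\<close> by simp
qed auto

lemma z_inv_conj_x_sq: "z \<otimes> x [^] (2::nat) \<otimes> inv z = x [^] (6::nat)"
  using z_mult_x_pow[of z 2] by (simp add: m_assoc)

lemma z_conj_x_sq: "inv z \<otimes> x [^] (2::nat) \<otimes> z = x [^] (6::nat)"
  using z_mult_x_pow[of "inv z" 2] by (simp add: m_assoc)

lemma z_x4_comm: "z \<otimes> x [^] (4::nat) = x [^] (4::nat) \<otimes> z"
  using z_mult_x_pow[of z 4] by (simp add: x_pow_reduce)

lemma z_sq_x_z_sq: "z [^] (2::nat) \<otimes> x \<otimes> z [^] (2::nat) = x"
proof -
  have "z [^] (2::nat) \<otimes> x \<otimes> z [^] (2::nat) = z \<otimes> (z \<otimes> x \<otimes> z) \<otimes> z"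
    by (simp add: numeral_2_eq_2 m_assoc)
  also have "\<dots> = z \<otimes> x [^] (3::nat) \<otimes> z"
    by (simp only: z_x_z)
  also have "\<dots> = x"
    using z_mult_x_pow[of z 3] by (simp add: m_assoc x_pow_reduce)
  finally show ?thesis .
qed

lemma z_pow4_x_z_pow4: "z [^] (4::nat) \<otimes> x \<otimes> z [^] (4::nat) = x"
proof -
  have "z [^] (4::nat) = z [^] (2::nat) \<otimes> z [^] (2::nat)" by (simp add: nat_pow_mult)
  then have "z [^] (4::nat) \<otimes> x \<otimes> z [^] (4::nat)
      = z [^] (2::nat) \<otimes> (z [^] (2::nat) \<otimes> x \<otimes> z [^] (2::nat)) \<otimes> z [^] (2::nat)"
    by (simp add: m_assoc)
  then show ?thesis by (simp add: z_sq_x_z_sq)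
qed

lemma w_conj_x_sq: "inv w \<otimes> x [^] (2::nat) \<otimes> w = x [^] (2::nat)"
proof -
  have "inv w \<otimes> x [^] (2::nat) \<otimes> w = (x \<otimes> z [^] (4::nat)) [^] (2::nat)"
    by (simp add: conj_pow w_conj_x)
  also have "\<dots> = x \<otimes> (z [^] (4::nat) \<otimes> x \<otimes> z [^] (4::nat))"
    by (simp add: numeral_2_eq_2 m_assoc)
  finally show ?thesis by (simp add: z_pow4_x_z_pow4 numeral_2_eq_2)
qed

lemma y_conj_z_sq: "inv y \<otimes> z [^] (2::nat) \<otimes> y = z [^] (2::nat)"
proof -
  have "inv y \<otimes> z [^] (2::nat) \<otimes> y = (z \<otimes> x [^] (4::nat)) [^] (2::nat)"
    by (simp add: conj_pow y_conj_z)
  also have "\<dots> = z \<otimes> (x [^] (4::nat) \<otimes> z) \<otimes> x [^] (4::nat)"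
    by (simp add: numeral_2_eq_2 m_assoc)
  also have "\<dots> = z [^] (2::nat)"
    by (simp add: z_x4_comm[symmetric] m_assoc pow_mult_left nat_pow_mult x_order numeral_2_eq_2)
  finally show ?thesis .
qed

lemma x_conj_z_sq: "inv x \<otimes> z [^] (2::nat) \<otimes> x = z [^] (6::nat)"
proof -
  have "inv x \<otimes> z [^] (2::nat) \<otimes> x = inv x \<otimes> (z [^] (2::nat) \<otimes> x \<otimes> z [^] (2::nat)) \<otimes> inv (z [^] (2::nat))"
    by (simp add: m_assoc)
  then show ?thesis by (simp add: z_sq_x_z_sq inv_z_sq)
qed

lemma x_inv_conj_z_sq: "x \<otimes> z [^] (2::nat) \<otimes> inv x = z [^] (6::nat)"
proof -
  have "x \<otimes> z [^] (2::nat) \<otimes> inv x = inv (z [^] (2::nat)) \<otimes> (z [^] (2::nat) \<otimes> x \<otimes> z [^] (2::nat)) \<otimes> inv x"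
    by (simp add: m_assoc)
  then show ?thesis by (simp add: z_sq_x_z_sq inv_z_sq m_assoc)
qed

lemma w_conj_x_pow_odd: "inv w \<otimes> x [^] (2 * m + 1 :: nat) \<otimes> w = x [^] (2 * m + 1 :: nat) \<otimes> z [^] (4::nat)"
proof -
  have "x [^] (2 * m + 1 :: nat) = (x [^] (2::nat)) [^] m \<otimes> x"
    by (simp add: nat_pow_pow mult.commute)
  then have "inv w \<otimes> x [^] (2 * m + 1 :: nat) \<otimes> w
      = (inv w \<otimes> x [^] (2::nat) \<otimes> w) [^] m \<otimes> (inv w \<otimes> x \<otimes> w)"
    by (simp add: conj_mult conj_pow)
  also have "\<dots> = x [^] (2 * m + 1 :: nat) \<otimes> z [^] (4::nat)"
    by (simp add: w_conj_x_sq w_conj_x nat_pow_pow m_assoc mult.commute)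
  finally show ?thesis .
qed

lemma y_conj_z_pow_odd: "inv y \<otimes> z [^] (2 * m + 1 :: nat) \<otimes> y = z [^] (2 * m + 1 :: nat) \<otimes> x [^] (4::nat)"
proof -
  have "z [^] (2 * m + 1 :: nat) = (z [^] (2::nat)) [^] m \<otimes> z"
    by (simp add: nat_pow_pow mult.commute)
  then have "inv y \<otimes> z [^] (2 * m + 1 :: nat) \<otimes> y
      = (inv y \<otimes> z [^] (2::nat) \<otimes> y) [^] m \<otimes> (inv y \<otimes> z \<otimes> y)"
    by (simp add: conj_mult conj_pow)
  also have "\<dots> = z [^] (2 * m + 1 :: nat) \<otimes> x [^] (4::nat)"
    by (simp add: y_conj_z_sq y_conj_z nat_pow_pow m_assoc mult.commute)
  finally show ?thesis .
qed

definition xz_products :: "'a set" where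
  "xz_products = range (\<lambda>(i, k). x [^] (i::nat) \<otimes> z [^] (k::nat))"

lemma xz_productsI: "x [^] (i::nat) \<otimes> z [^] (k::nat) \<in> xz_products"
  unfolding xz_products_def by (rule image_eqI[of _ _ "(i, k)"]) simp_all

lemma xz_productsE:
  assumes "p \<in> xz_products" obtains i k :: nat where "p = x [^] i \<otimes> z [^] k"
  using assms unfolding xz_products_def by auto

lemma z_mult_xz_products: "p \<in> xz_products \<Longrightarrow> z \<otimes> p \<in> xz_products"
proof (erule xz_productsE)
  fix i k :: nat assume p: "p = x [^] i \<otimes> z [^] k"
  have "z \<otimes> p = (z \<otimes> x [^] i) \<otimes> z [^] k"
    by (simp add: p m_assoc)
  also have "\<dots> = x [^] (3 * i) \<otimes> (z [^] (if even i then 1 else 7 :: nat) \<otimes> z [^] k)"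
    by (simp add: z_mult_x_pow m_assoc inv_z)
  also have "\<dots> = x [^] (3 * i) \<otimes> z [^] ((if even i then 1 else 7) + k)"
    by (simp add: nat_pow_mult)
  finally show "z \<otimes> p \<in> xz_products" by (simp only: xz_productsI)
qed

lemma x_pow_mult_xz_products: "p \<in> xz_products \<Longrightarrow> x [^] (j::nat) \<otimes> p \<in> xz_products"
  by (erule xz_productsE) (simp add: pow_mult_left xz_productsI)

lemma z_pow_mult_x: "z [^] (c::nat) \<otimes> x \<in> xz_products"
proof (induction c)
  case 0
  show ?case using xz_productsI[of 1 0] by simp
next
  case (Suc c)
  have "z [^] Suc c \<otimes> x = z \<otimes> z [^] c \<otimes> x"
    by (simp only: nat_pow_Suc2 generators_closed m_closed nat_pow_closed)
  also have "\<dots> = z \<otimes> (z [^] c \<otimes> x)"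
    by (simp add: m_assoc)
  finally have "z [^] Suc c \<otimes> x = z \<otimes> (z [^] c \<otimes> x)" .
  then show ?case using z_mult_xz_products[OF Suc.IH] by simp
qed

lemma z_pow_mult_y: "z [^] (c::nat) \<otimes> y = y \<otimes> (z \<otimes> x [^] (4::nat)) [^] c"
proof -
  have "z [^] c \<otimes> y = y \<otimes> (inv y \<otimes> z [^] c \<otimes> y)"
    by (simp add: m_assoc)
  then show ?thesis by (simp add: conj_pow y_conj_z)
qed

lemma z_x4_pow: "(z \<otimes> x [^] (4::nat)) [^] (c::nat) \<in> xz_products"
proof (induction c)
  case 0
  show ?case using xz_productsI[of 0 0] by simp
next
  case (Suc c)
  have "(z \<otimes> x [^] (4::nat)) [^] Suc c = (z \<otimes> x [^] (4::nat)) \<otimes> (z \<otimes> x [^] (4::nat)) [^] c"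
    by (simp only: nat_pow_Suc2 generators_closed m_closed nat_pow_closed)
  then have "(z \<otimes> x [^] (4::nat)) [^] Suc c = z \<otimes> (x [^] (4::nat) \<otimes> (z \<otimes> x [^] (4::nat)) [^] c)"
    by (simp add: m_assoc)
  then show ?case
    using z_mult_xz_products[OF x_pow_mult_xz_products[OF Suc.IH]] by simp
qed

lemma generate_x_y_subset:
  "generate G {x, y} \<subseteq> (\<lambda>(i, j). x [^] i \<otimes> y [^] j) ` ({..<8::nat} \<times> {..<2::nat})"
  by (rule SD16_relations_generate_subset) (simp_all add: x_order y_order y_conj_x)

lemma generate_z_w_subset:
  "generate G {z, w} \<subseteq> (\<lambda>(c, l). z [^] c \<otimes> w [^] l) ` ({..<8::nat} \<times> {..<2::nat})"
  by (rule SD16_relations_generate_subset) (simp_all add: z_order w_order w_conj_z)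

lemma generate_subset_set_mult:
  "generate G {x, y, z, w} \<subseteq> generate G {x, y} <#> generate G {z, w}"
proof -
  let ?H = "generate G {x, y}" and ?K = "generate G {z, w}"
  have H: "subgroup ?H G" and K: "subgroup ?K G" by (simp_all add: generate_is_subgroup)
  have in_HK: "h \<otimes> k \<in> ?H <#> ?K" if "h \<in> ?H" "k \<in> ?K" for h k
    using that by (auto simp: set_mult_def)
  have x_pow: "x [^] (i::nat) \<in> ?H" and y: "y \<in> ?H" for i
    by (auto intro: subgroup_nat_pow_closed[OF H] generate.incl)
  have z_pow: "z [^] (m::nat) \<in> ?K" and w_pow: "w [^] (l::nat) \<in> ?K" for m l
    by (auto intro: subgroup_nat_pow_closed[OF K] generate.incl)
  have xz: "h \<otimes> (p \<otimes> k) \<in> ?H <#> ?K" if "h \<in> ?H" "p \<in> xz_products" "k \<in> ?K" for h p k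
  proof -
    obtain i m :: nat where p: "p = x [^] i \<otimes> z [^] m" using \<open>p \<in> xz_products\<close> by (rule xz_productsE)
    have "h \<otimes> (p \<otimes> k) = (h \<otimes> x [^] i) \<otimes> (z [^] m \<otimes> k)"
      using that subgroup.mem_carrier[OF H] subgroup.mem_carrier[OF K] by (simp add: p m_assoc)
    then show ?thesis
      using that x_pow z_pow H K by (auto intro!: in_HK subgroup.m_closed)
  qed
  have K_mult: "k \<otimes> a \<in> ?H <#> ?K" if k: "k \<in> ?K" and a: "a \<in> {x, y}" for k a
  proof -
    obtain c l :: nat where "l < 2" and kcl: "k = z [^] c \<otimes> w [^] l"
      using k generate_z_w_subset by fastforce
    then have wx: "w [^] l \<otimes> x = x \<otimes> (z [^] (4 * l) \<otimes> w [^] l)"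
      and wy: "w [^] l \<otimes> y = y \<otimes> w [^] l"
      using w_mult_x w_y_comm by (auto simp: less_2_cases_iff)
    have "k \<otimes> x = z [^] c \<otimes> (w [^] l \<otimes> x)"
      by (simp add: kcl m_assoc)
    then have kx: "k \<otimes> x = \<one> \<otimes> ((z [^] c \<otimes> x) \<otimes> (z [^] (4 * l) \<otimes> w [^] l))"
      by (simp add: wx m_assoc)
    have "k \<otimes> y = (z [^] c \<otimes> y) \<otimes> w [^] l"
      by (simp add: kcl m_assoc wy)
    then have ky: "k \<otimes> y = y \<otimes> ((z \<otimes> x [^] (4::nat)) [^] c \<otimes> w [^] l)"
      by (simp add: z_pow_mult_y m_assoc)
    have "z [^] (4 * l) \<otimes> w [^] l \<in> ?K"
      using z_pow w_pow K by (auto intro: subgroup.m_closed)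
    then have "k \<otimes> x \<in> ?H <#> ?K"
      unfolding kx by (rule xz[OF subgroup.one_closed[OF H] z_pow_mult_x])
    moreover have "k \<otimes> y \<in> ?H <#> ?K"
      unfolding ky by (rule xz[OF y z_x4_pow w_pow])
    ultimately show ?thesis using a by auto
  qed
  show ?thesis
  proof (rule generate_subset_if_right_mult_closed)
    show "?H <#> ?K \<subseteq> carrier G"
      using H K by (auto simp: set_mult_def intro: subgroup.mem_carrier)
    show "\<one> \<in> ?H <#> ?K"
      using in_HK[OF subgroup.one_closed[OF H] subgroup.one_closed[OF K]] by simp
    fix s a assume s: "s \<in> ?H <#> ?K" and a: "a \<in> {x, y, z, w}"
    then obtain h k where hk: "h \<in> ?H" "k \<in> ?K" "s = h \<otimes> k" by (auto simp: set_mult_def)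
    then have s_a: "s \<otimes> a = h \<otimes> (k \<otimes> a)"
      using a subgroup.mem_carrier[OF H] subgroup.mem_carrier[OF K] by (auto simp: m_assoc)
    show "s \<otimes> a \<in> ?H <#> ?K"
    proof (cases "a \<in> {x, y}")
      case True
      then obtain h' k' where h'k': "h' \<in> ?H" "k' \<in> ?K" "k \<otimes> a = h' \<otimes> k'"
        using K_mult[OF hk(2) True] by (auto simp: set_mult_def)
      then have "s \<otimes> a = (h \<otimes> h') \<otimes> k'"
        using s_a hk(1) subgroup.mem_carrier[OF H] subgroup.mem_carrier[OF K] by (simp add: m_assoc)
      moreover have "h \<otimes> h' \<in> ?H" using subgroup.m_closed[OF H hk(1) h'k'(1)] .
      ultimately show ?thesis using in_HK h'k'(2) by simp
    next
      case False
      then have "k \<otimes> a \<in> ?K" using a hk(2) K by (auto intro: subgroup.m_closed generate.incl)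
      then show ?thesis using s_a in_HK[OF hk(1)] by simp
    qed
  next
    fix a assume "a \<in> {x, y, z, w}"
    then show "\<exists>n>0. a [^] (n::nat) = \<one>"
      using x_order y_order z_order w_order by (metis insertE singletonD zero_less_numeral)
  qed simp
qed

lemma pow_in_generate: "a \<in> carrier G \<Longrightarrow> a [^] (n::nat) \<in> generate G {a}"
  by (rule subgroup_nat_pow_closed[OF generate_is_subgroup]) (auto intro: generate.incl)

lemma normal_generate_x_sq:
  assumes "generate G {x, y, z, w} = carrier G"
  shows "generate G {x [^] (2::nat)} \<lhd> G"
proof (rule normal_generate_if_conj_closed[OF _ assms])
  have x_sq: "x [^] (2::nat) \<in> generate G {x [^] (2::nat)}" and
    x6: "x [^] (6::nat) \<in> generate G {x [^] (2::nat)}"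
    using pow_in_generate[of "x [^] (2::nat)" 1] pow_in_generate[of "x [^] (2::nat)" 3]
    by (simp_all add: nat_pow_pow)
  have "x \<otimes> x [^] (2::nat) \<otimes> inv x = x [^] (2::nat)" "inv x \<otimes> x [^] (2::nat) \<otimes> x = x [^] (2::nat)"
    by (simp_all add: m_assoc numeral_2_eq_2)
  moreover have "inv y \<otimes> x [^] (2::nat) \<otimes> y = x [^] (6::nat)"
    by (simp add: conj_pow y_conj_x nat_pow_pow)
  ultimately show "a \<otimes> b \<otimes> inv a \<in> generate G {x [^] (2::nat)}"
    and "inv a \<otimes> b \<otimes> a \<in> generate G {x [^] (2::nat)}"
    if "a \<in> {x, y, z, w}" and "b \<in> {x [^] (2::nat)}" for a b
    using that x_sq x6 z_inv_conj_x_sq z_conj_x_sq w_conj_x_sq by (auto simp: inv_y inv_w)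
qed auto

lemma normal_generate_z_sq:
  assumes "generate G {x, y, z, w} = carrier G"
  shows "generate G {z [^] (2::nat)} \<lhd> G"
proof (rule normal_generate_if_conj_closed[OF _ assms])
  have z_sq: "z [^] (2::nat) \<in> generate G {z [^] (2::nat)}" and
    z6: "z [^] (6::nat) \<in> generate G {z [^] (2::nat)}"
    using pow_in_generate[of "z [^] (2::nat)" 1] pow_in_generate[of "z [^] (2::nat)" 3]
    by (simp_all add: nat_pow_pow)
  have "z \<otimes> z [^] (2::nat) \<otimes> inv z = z [^] (2::nat)" "inv z \<otimes> z [^] (2::nat) \<otimes> z = z [^] (2::nat)"
    by (simp_all add: m_assoc numeral_2_eq_2)
  moreover have "inv w \<otimes> z [^] (2::nat) \<otimes> w = z [^] (6::nat)"
    by (simp add: conj_pow w_conj_z nat_pow_pow)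
  ultimately show "a \<otimes> b \<otimes> inv a \<in> generate G {z [^] (2::nat)}"
    and "inv a \<otimes> b \<otimes> a \<in> generate G {z [^] (2::nat)}"
    if "a \<in> {x, y, z, w}" and "b \<in> {z [^] (2::nat)}" for a b
    using that z_sq z6 x_inv_conj_z_sq x_conj_z_sq y_conj_z_sq by (auto simp: inv_y inv_w)
qed auto

lemma w_inv_conj_x_pow_odd: "odd k \<Longrightarrow> w \<otimes> x [^] (k::nat) \<otimes> inv w = x [^] k \<otimes> z [^] (4::nat)"
  using w_conj_x_pow_odd[of "k div 2"] by (simp add: inv_w)

lemma y_inv_conj_z_pow_odd: "odd k \<Longrightarrow> y \<otimes> z [^] (k::nat) \<otimes> inv y = z [^] k \<otimes> x [^] (4::nat)"
  using y_conj_z_pow_odd[of "k div 2"] by (simp add: inv_y)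

end

lemma group_G6: "group G6"
  unfolding G6_def by (rule group_presented_group)

lemma G6_mult: "pres_class G_rels u \<otimes>\<^bsub>G6\<^esub> pres_class G_rels v = pres_class G_rels (u @ v)"
  by (simp add: G6_def)

lemma G6_inv: "inv\<^bsub>G6\<^esub> pres_class G_rels u = pres_class G_rels (inv_word u)"
  by (simp add: G6_def presented_group_inv)

lemma G6_one: "\<one>\<^bsub>G6\<^esub> = pres_class G_rels []"
  by (simp add: G6_def presented_group_one)

lemma G6_gen_pow: "pres_class G_rels [(g, False)] [^]\<^bsub>G6\<^esub> (n::nat) = pres_class G_rels (gpow g n)"
  by (simp add: G6_def pres_class_gpow pres_gen_def)

lemma G6_carrier: "carrier G6 = range (pres_class G_rels)"
  by (simp add: G6_def presented_group_carrier)

lemmas G6_eval = G6_mult G6_inv G6_one G6_gen_pow pres_gen_def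

interpretation G6: G6_relations G6 "pres_gen G_rels gX" "pres_gen G_rels gY" "pres_gen G_rels gZ" "pres_gen G_rels gW"
proof (rule G6_relations.intro[OF group_G6], unfold_locales)
qed (simp_all add: G6_carrier G6_eval, (rule pres_class_rel, simp add: G_rels_def)+)

lemma generate_G6_generators:
  "generate G6 {pres_gen G_rels gX, pres_gen G_rels gY, pres_gen G_rels gZ, pres_gen G_rels gW} = carrier G6"
proof -
  have "UNIV = {gX, gY, gZ, gW}"
    using gen4.exhaust by blast
  then have "range (pres_gen G_rels) = {pres_gen G_rels gX, pres_gen G_rels gY, pres_gen G_rels gZ, pres_gen G_rels gW}"
    by (metis image_empty image_insert)
  then show ?thesis using generate_pres_gen[of G_rels] by (simp add: G6_def)
qed

lemma G6_set_mult_eq_carrier: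
  "generate G6 {pres_gen G_rels gX, pres_gen G_rels gY} <#>\<^bsub>G6\<^esub> generate G6 {pres_gen G_rels gZ, pres_gen G_rels gW}
    = carrier G6"
proof
  show "carrier G6 \<subseteq> generate G6 {pres_gen G_rels gX, pres_gen G_rels gY} <#>\<^bsub>G6\<^esub> generate G6 {pres_gen G_rels gZ, pres_gen G_rels gW}"
    using G6.generate_subset_set_mult generate_G6_generators by simp
  show "generate G6 {pres_gen G_rels gX, pres_gen G_rels gY} <#>\<^bsub>G6\<^esub> generate G6 {pres_gen G_rels gZ, pres_gen G_rels gW} \<subseteq> carrier G6"
    by (intro G6.set_mult_closed subgroup.subset[OF G6.generate_is_subgroup]) auto
qed

fun H_coset_action :: "gen4 letter \<Rightarrow> nat \<times> nat \<Rightarrow> nat \<times> nat" where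
  "H_coset_action (gX, _) (a, b) = ((4 * b + 8 - a) mod 8, b)"
| "H_coset_action (gY, _) p = p"
| "H_coset_action (gZ, False) (a, b) = ((a + 3 ^ b) mod 8, b)"
| "H_coset_action (gZ, True) (a, b) = ((a + 8 - 3 ^ b) mod 8, b)"
| "H_coset_action (gW, _) (a, b) = (a, 1 - b)"

fun K_coset_action :: "gen4 letter \<Rightarrow> nat \<times> nat \<Rightarrow> nat \<times> nat" where
  "K_coset_action (gX, False) (i, j) = ((i + 3 ^ j) mod 8, j)"
| "K_coset_action (gX, True) (i, j) = ((i + 8 - 3 ^ j) mod 8, j)"
| "K_coset_action (gY, _) (i, j) = (i, 1 - j)"
| "K_coset_action (gZ, _) (i, j) = ((3 * i + 4 * j) mod 8, j)"
| "K_coset_action (gW, _) p = p"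

lemma H_coset_action_closed: "q \<in> {..<8} \<times> {..<2} \<Longrightarrow> H_coset_action l q \<in> {..<8} \<times> {..<2}"
  by (cases "(l, q)" rule: H_coset_action.cases) auto

lemma K_coset_action_closed: "q \<in> {..<8} \<times> {..<2} \<Longrightarrow> K_coset_action l q \<in> {..<8} \<times> {..<2}"
  by (cases "(l, q)" rule: K_coset_action.cases) auto

lemma replicate_numeral: "replicate (numeral n) a = a # replicate (pred_numeral n) a"
  by (simp add: numeral_eq_Suc)

lemma coset_label_cases:
  assumes "q \<in> {..<8::nat} \<times> {..<2::nat}"
  obtains a b where "q = (a, b)" "a \<in> {0, 1, 2, 3, 4, 5, 6, 7}" "b \<in> {0, 1}"
proof -
  obtain a b where "q = (a, b)" "a < 8" "b < 2" using assms by auto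
  moreover have "a \<in> {0, 1, 2, 3, 4, 5, 6, 7}" "b \<in> {0, 1}"
    using \<open>a < 8\<close> \<open>b < 2\<close> by auto
  ultimately show ?thesis using that by blast
qed

lemma H_coset_action_cancel:
  "q \<in> {..<8} \<times> {..<2} \<Longrightarrow> H_coset_action (g, \<not> b) (H_coset_action (g, b) q) = q"
  by (erule coset_label_cases) (cases g; cases b; auto)

lemma K_coset_action_cancel:
  "q \<in> {..<8} \<times> {..<2} \<Longrightarrow> K_coset_action (g, \<not> b) (K_coset_action (g, b) q) = q"
  by (erule coset_label_cases) (cases g; cases b; auto)

lemma H_coset_action_relations:
  "(r, s) \<in> G_rels \<Longrightarrow> q \<in> {..<8} \<times> {..<2} \<Longrightarrow> fold H_coset_action r q = fold H_coset_action s q"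
  by (erule coset_label_cases) (auto simp: G_rels_def replicate_numeral simp del: fold_replicate)

lemma K_coset_action_relations:
  "(r, s) \<in> G_rels \<Longrightarrow> q \<in> {..<8} \<times> {..<2} \<Longrightarrow> fold K_coset_action r q = fold K_coset_action s q"
  by (erule coset_label_cases) (auto simp: G_rels_def replicate_numeral simp del: fold_replicate)

lemma fold_K_coset_action_x_pow: "c < 8 \<Longrightarrow> fold K_coset_action (gpow gX i) (c, 0) = ((c + i) mod 8, 0)"
  by (induction i arbitrary: c) (simp_all add: mod_add_left_eq del: fold_replicate)

lemma fold_H_coset_action_z_pow: "c < 8 \<Longrightarrow> fold H_coset_action (gpow gZ k) (c, 0) = ((c + k) mod 8, 0)"
  by (induction k arbitrary: c) (simp_all add: mod_add_left_eq del: fold_replicate)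

lemma fold_H_coset_action_x_pow: "fold H_coset_action (gpow gX i) (0, 0) = (0, 0)"
  by (induction i) (simp_all del: fold_replicate)

lemma K_coset_label_normal_form:
  "i < 8 \<Longrightarrow> j < 2 \<Longrightarrow> fold K_coset_action (gpow gX i @ gpow gY j) (0, 0) = (i, j)"
  by (auto simp: fold_K_coset_action_x_pow less_2_cases_iff simp del: fold_replicate)

lemma H_coset_label_normal_form:
  "k < 8 \<Longrightarrow> l < 2 \<Longrightarrow> fold H_coset_action (gpow gZ k @ gpow gW l) (0, 0) = (k, l)"
  by (auto simp: fold_H_coset_action_z_pow less_2_cases_iff simp del: fold_replicate)

lemma H_coset_label_H: "fold H_coset_action (gpow gX i @ gpow gY j) (0, 0) = (0, 0)"
  by (induction j) (simp_all add: fold_H_coset_action_x_pow del: fold_replicate)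

lemma H_coset_label_eq:
  "pres_class G_rels u = pres_class G_rels v \<Longrightarrow> fold H_coset_action u (0, 0) = fold H_coset_action v (0, 0)"
  unfolding pres_class_eq_iff
  by (erule pres_eq_fold_action[where P = "{..<8} \<times> {..<2}"])
    (simp_all add: H_coset_action_closed H_coset_action_cancel H_coset_action_relations)

lemma K_coset_label_eq:
  "pres_class G_rels u = pres_class G_rels v \<Longrightarrow> fold K_coset_action u (0, 0) = fold K_coset_action v (0, 0)"
  unfolding pres_class_eq_iff
  by (erule pres_eq_fold_action[where P = "{..<8} \<times> {..<2}"])
    (simp_all add: K_coset_action_closed K_coset_action_cancel K_coset_action_relations)

lemma G6_normal_form_class:
  "pres_gen G_rels g [^]\<^bsub>G6\<^esub> (i::nat) \<otimes>\<^bsub>G6\<^esub> pres_gen G_rels h [^]\<^bsub>G6\<^esub> (j::nat)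
    = pres_class G_rels (gpow g i @ gpow h j)"
  by (simp add: pres_gen_def G6_gen_pow G6_mult)

lemma inj_on_H_normal_form:
  "inj_on (\<lambda>(i, j). pres_gen G_rels gX [^]\<^bsub>G6\<^esub> i \<otimes>\<^bsub>G6\<^esub> pres_gen G_rels gY [^]\<^bsub>G6\<^esub> j)
     ({..<8::nat} \<times> {..<2::nat})"
  by (rule inj_onI, clarsimp simp: G6_normal_form_class)
    (metis K_coset_label_eq K_coset_label_normal_form Pair_inject)

lemma inj_on_K_normal_form:
  "inj_on (\<lambda>(k, l). pres_gen G_rels gZ [^]\<^bsub>G6\<^esub> k \<otimes>\<^bsub>G6\<^esub> pres_gen G_rels gW [^]\<^bsub>G6\<^esub> l)
     ({..<8::nat} \<times> {..<2::nat})"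
  by (rule inj_onI, clarsimp simp: G6_normal_form_class)
    (metis H_coset_label_eq H_coset_label_normal_form Pair_inject)

lemma generate_x_y_eq:
  "generate G6 {pres_gen G_rels gX, pres_gen G_rels gY}
    = (\<lambda>(i, j). pres_gen G_rels gX [^]\<^bsub>G6\<^esub> i \<otimes>\<^bsub>G6\<^esub> pres_gen G_rels gY [^]\<^bsub>G6\<^esub> j) ` ({..<8::nat} \<times> {..<2::nat})"
  (is "?A = ?B")
proof
  show "?A \<subseteq> ?B"
    by (rule G6.generate_x_y_subset)
  have sg: "subgroup ?A G6" by (simp add: G6.generate_is_subgroup)
  have "pres_gen G_rels gX \<in> ?A" "pres_gen G_rels gY \<in> ?A" by (auto intro: generate.incl)
  then show "?B \<subseteq> ?A"
    using subgroup.m_closed[OF sg G6.subgroup_nat_pow_closed[OF sg] G6.subgroup_nat_pow_closed[OF sg]]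
    by auto
qed

lemma generate_z_w_eq:
  "generate G6 {pres_gen G_rels gZ, pres_gen G_rels gW}
    = (\<lambda>(k, l). pres_gen G_rels gZ [^]\<^bsub>G6\<^esub> k \<otimes>\<^bsub>G6\<^esub> pres_gen G_rels gW [^]\<^bsub>G6\<^esub> l) ` ({..<8::nat} \<times> {..<2::nat})"
  (is "?A = ?B")
proof
  show "?A \<subseteq> ?B"
    by (rule G6.generate_z_w_subset)
  have sg: "subgroup ?A G6" by (simp add: G6.generate_is_subgroup)
  have "pres_gen G_rels gZ \<in> ?A" "pres_gen G_rels gW \<in> ?A" by (auto intro: generate.incl)
  then show "?B \<subseteq> ?A"
    using subgroup.m_closed[OF sg G6.subgroup_nat_pow_closed[OF sg] G6.subgroup_nat_pow_closed[OF sg]]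
    by auto
qed

lemma card_generate_x_y: "card (generate G6 {pres_gen G_rels gX, pres_gen G_rels gY}) = 16"
  by (simp add: generate_x_y_eq card_image[OF inj_on_H_normal_form] card_cartesian_product)

lemma card_generate_z_w: "card (generate G6 {pres_gen G_rels gZ, pres_gen G_rels gW}) = 16"
  by (simp add: generate_z_w_eq card_image[OF inj_on_K_normal_form] card_cartesian_product)

lemma generate_x_y_inter_z_w:
  "generate G6 {pres_gen G_rels gX, pres_gen G_rels gY} \<inter> generate G6 {pres_gen G_rels gZ, pres_gen G_rels gW}
    = {\<one>\<^bsub>G6\<^esub>}"
proof (rule equalityI; clarify)
  fix g assume "g \<in> generate G6 {pres_gen G_rels gX, pres_gen G_rels gY}"
    and "g \<in> generate G6 {pres_gen G_rels gZ, pres_gen G_rels gW}"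
  then obtain i j k l :: nat where "k < 8" "l < 2"
    and "pres_class G_rels (gpow gX i @ gpow gY j) = pres_class G_rels (gpow gZ k @ gpow gW l)"
    and g: "g = pres_class G_rels (gpow gZ k @ gpow gW l)"
    unfolding generate_x_y_eq generate_z_w_eq by (auto simp: G6_normal_form_class)
  then have "(k, l) = (0, 0)"
    using H_coset_label_eq H_coset_label_H H_coset_label_normal_form by metis
  then show "g = \<one>\<^bsub>G6\<^esub>" using g by (simp add: G6_one)
qed (auto intro: generate.one)

lemma x_pow_ne_one: "0 < i \<Longrightarrow> i < 8 \<Longrightarrow> pres_gen G_rels gX [^]\<^bsub>G6\<^esub> (i::nat) \<noteq> \<one>\<^bsub>G6\<^esub>"
  using inj_onD[OF inj_on_H_normal_form, of "(i, 0)" "(0, 0)"] by (auto simp: G6.r_one)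

lemma y_ne_one: "pres_gen G_rels gY \<noteq> \<one>\<^bsub>G6\<^esub>"
  using inj_onD[OF inj_on_H_normal_form, of "(0, 1)" "(0, 0)"] by auto

lemma z_pow_ne_one: "0 < k \<Longrightarrow> k < 8 \<Longrightarrow> pres_gen G_rels gZ [^]\<^bsub>G6\<^esub> (k::nat) \<noteq> \<one>\<^bsub>G6\<^esub>"
  using inj_onD[OF inj_on_K_normal_form, of "(k, 0)" "(0, 0)"] by (auto simp: G6.r_one)

lemma w_ne_one: "pres_gen G_rels gW \<noteq> \<one>\<^bsub>G6\<^esub>"
  using inj_onD[OF inj_on_K_normal_form, of "(0, 1)" "(0, 0)"] by auto

lemma order_G6: "order G6 = 256"
  using G6.card_set_mult_eq[OF G6.generate_is_subgroup G6.generate_is_subgroup generate_x_y_inter_z_w]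
  by (simp add: order_def G6_set_mult_eq_carrier card_generate_x_y card_generate_z_w)

lemma ord_G6_generators:
  "group.ord G6 (pres_gen G_rels gX) = 8" "group.ord G6 (pres_gen G_rels gZ) = 8"
  "group.ord G6 (pres_gen G_rels gY) = 2" "group.ord G6 (pres_gen G_rels gW) = 2"
  using G6.ord_eq_two_power[of _ 2] G6.ord_eq_two_power[of _ 0]
    G6.x_order G6.z_order G6.y_order G6.w_order
    x_pow_ne_one[of 4] z_pow_ne_one[of 4] y_ne_one w_ne_one
  by simp_all

lemma x_sq_mult_z_sq_ne_one:
  "pres_gen G_rels gX [^]\<^bsub>G6\<^esub> (2::nat) \<otimes>\<^bsub>G6\<^esub> pres_gen G_rels gZ [^]\<^bsub>G6\<^esub> (2::nat) \<noteq> \<one>\<^bsub>G6\<^esub>"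
proof
  let ?x2 = "pres_gen G_rels gX [^]\<^bsub>G6\<^esub> (2::nat)" and ?z2 = "pres_gen G_rels gZ [^]\<^bsub>G6\<^esub> (2::nat)"
  assume "?x2 \<otimes>\<^bsub>G6\<^esub> ?z2 = \<one>\<^bsub>G6\<^esub>"
  then have "?x2 = inv\<^bsub>G6\<^esub> ?z2" by (simp add: G6.inv_equality[symmetric])
  moreover have "?x2 \<in> generate G6 {pres_gen G_rels gX, pres_gen G_rels gY}"
    by (rule G6.subgroup_nat_pow_closed[OF G6.generate_is_subgroup]) (auto intro: generate.incl)
  moreover have "inv\<^bsub>G6\<^esub> ?z2 \<in> generate G6 {pres_gen G_rels gZ, pres_gen G_rels gW}"
  proof -
    have sg: "subgroup (generate G6 {pres_gen G_rels gZ, pres_gen G_rels gW}) G6"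
      by (simp add: G6.generate_is_subgroup)
    have "pres_gen G_rels gZ \<in> generate G6 {pres_gen G_rels gZ, pres_gen G_rels gW}"
      by (auto intro: generate.incl)
    then show ?thesis by (intro subgroup.m_inv_closed[OF sg] G6.subgroup_nat_pow_closed[OF sg])
  qed
  ultimately have "?x2 \<in> generate G6 {pres_gen G_rels gX, pres_gen G_rels gY} \<inter>
      generate G6 {pres_gen G_rels gZ, pres_gen G_rels gW}" by simp
  then have "?x2 = \<one>\<^bsub>G6\<^esub>" by (simp only: generate_x_y_inter_z_w singleton_iff)
  then show False using x_pow_ne_one[of 2] by simp
qed

lemma pow_notin_generate_other:
  "pres_gen G_rels gZ [^]\<^bsub>G6\<^esub> (4::nat) \<notin> generate G6 {pres_gen G_rels gX}"
  "pres_gen G_rels gX [^]\<^bsub>G6\<^esub> (4::nat) \<notin> generate G6 {pres_gen G_rels gZ}"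
proof -
  have sgH: "subgroup (generate G6 {pres_gen G_rels gX, pres_gen G_rels gY}) G6"
    and sgK: "subgroup (generate G6 {pres_gen G_rels gZ, pres_gen G_rels gW}) G6"
    by (simp_all add: G6.generate_is_subgroup)
  have "pres_gen G_rels gX \<in> generate G6 {pres_gen G_rels gX, pres_gen G_rels gY}"
    "pres_gen G_rels gZ \<in> generate G6 {pres_gen G_rels gZ, pres_gen G_rels gW}"
    by (auto intro: generate.incl)
  then have in_H: "pres_gen G_rels gX [^]\<^bsub>G6\<^esub> (4::nat) \<in> generate G6 {pres_gen G_rels gX, pres_gen G_rels gY}"
    and in_K: "pres_gen G_rels gZ [^]\<^bsub>G6\<^esub> (4::nat) \<in> generate G6 {pres_gen G_rels gZ, pres_gen G_rels gW}"
    by (auto intro: G6.subgroup_nat_pow_closed[OF sgH] G6.subgroup_nat_pow_closed[OF sgK])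
  have H: "generate G6 {pres_gen G_rels gX} \<subseteq> generate G6 {pres_gen G_rels gX, pres_gen G_rels gY}"
    and K: "generate G6 {pres_gen G_rels gZ} \<subseteq> generate G6 {pres_gen G_rels gZ, pres_gen G_rels gW}"
    by (simp_all add: G6.mono_generate)
  show "pres_gen G_rels gZ [^]\<^bsub>G6\<^esub> (4::nat) \<notin> generate G6 {pres_gen G_rels gX}"
  proof
    assume "pres_gen G_rels gZ [^]\<^bsub>G6\<^esub> (4::nat) \<in> generate G6 {pres_gen G_rels gX}"
    then have "pres_gen G_rels gZ [^]\<^bsub>G6\<^esub> (4::nat) \<in> generate G6 {pres_gen G_rels gX, pres_gen G_rels gY} \<inter>
        generate G6 {pres_gen G_rels gZ, pres_gen G_rels gW}"
      using H in_K by blast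
    then show False using z_pow_ne_one[of 4] by (simp only: generate_x_y_inter_z_w singleton_iff)
  qed
  show "pres_gen G_rels gX [^]\<^bsub>G6\<^esub> (4::nat) \<notin> generate G6 {pres_gen G_rels gZ}"
  proof
    assume "pres_gen G_rels gX [^]\<^bsub>G6\<^esub> (4::nat) \<in> generate G6 {pres_gen G_rels gZ}"
    then have "pres_gen G_rels gX [^]\<^bsub>G6\<^esub> (4::nat) \<in> generate G6 {pres_gen G_rels gX, pres_gen G_rels gY} \<inter>
        generate G6 {pres_gen G_rels gZ, pres_gen G_rels gW}"
      using K in_H by blast
    then show False using x_pow_ne_one[of 4] by (simp only: generate_x_y_inter_z_w singleton_iff)
  qed
qed

lemma core_generate_x:
  "core G6 (generate G6 {pres_gen G_rels gX}) = generate G6 {pres_gen G_rels gX [^]\<^bsub>G6\<^esub> (2::nat)}"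
  by (rule G6.core_generate_eq_generate_sq[OF _ _ _ G6.normal_generate_x_sq[OF generate_G6_generators]
        G6.w_inv_conj_x_pow_odd _ pow_notin_generate_other(1)])
    (simp_all add: ord_G6_generators)

lemma core_generate_z:
  "core G6 (generate G6 {pres_gen G_rels gZ}) = generate G6 {pres_gen G_rels gZ [^]\<^bsub>G6\<^esub> (2::nat)}"
  by (rule G6.core_generate_eq_generate_sq[OF _ _ _ G6.normal_generate_z_sq[OF generate_G6_generators]
        G6.y_inv_conj_z_pow_odd _ pow_notin_generate_other(2)])
    (simp_all add: ord_G6_generators)

lemma card_generate_squares:
  "card (generate G6 {pres_gen G_rels gX [^]\<^bsub>G6\<^esub> (2::nat)}) = 4"
  "card (generate G6 {pres_gen G_rels gZ [^]\<^bsub>G6\<^esub> (2::nat)}) = 4"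
  using G6.generate_pow_card[of "pres_gen G_rels gX [^]\<^bsub>G6\<^esub> (2::nat)"]
    G6.generate_pow_card[of "pres_gen G_rels gZ [^]\<^bsub>G6\<^esub> (2::nat)"]
    G6.ord_pow[of "pres_gen G_rels gX" 2] G6.ord_pow[of "pres_gen G_rels gZ" 2]
  by (simp_all add: ord_G6_generators)

theorem theorem6p6:
  fixes x y z w :: "gen4 word set" and H K :: "gen4 word set set"
  defines "x \<equiv> pres_gen G_rels gX" and "y \<equiv> pres_gen G_rels gY"
      and "z \<equiv> pres_gen G_rels gZ" and "w \<equiv> pres_gen G_rels gW"
      and "H \<equiv> generate G6 {x, y}" and "K \<equiv> generate G6 {z, w}"
  shows "group G6
    \<and> order G6 = 256
    \<and> H <#>\<^bsub>G6\<^esub> K = carrier G6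
    \<and> H \<inter> K = {\<one>\<^bsub>G6\<^esub>}
    \<and> G6\<lparr>carrier := H\<rparr> \<cong> SD16
    \<and> G6\<lparr>carrier := K\<rparr> \<cong> SD16
    \<and> group.ord G6 x = 8 \<and> group.ord G6 z = 8
    \<and> group.ord G6 y = 2 \<and> group.ord G6 w = 2
    \<and> inv\<^bsub>G6\<^esub> x \<otimes>\<^bsub>G6\<^esub> inv\<^bsub>G6\<^esub> z \<otimes>\<^bsub>G6\<^esub> x \<otimes>\<^bsub>G6\<^esub> z
        = x [^]\<^bsub>G6\<^esub> (2::nat) \<otimes>\<^bsub>G6\<^esub> z [^]\<^bsub>G6\<^esub> (2::nat)
    \<and> inv\<^bsub>G6\<^esub> x \<otimes>\<^bsub>G6\<^esub> inv\<^bsub>G6\<^esub> z \<otimes>\<^bsub>G6\<^esub> x \<otimes>\<^bsub>G6\<^esub> z \<noteq> \<one>\<^bsub>G6\<^esub>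
    \<and> core G6 (generate G6 {x}) = generate G6 {x [^]\<^bsub>G6\<^esub> (2::nat)}
    \<and> core G6 (generate G6 {z}) = generate G6 {z [^]\<^bsub>G6\<^esub> (2::nat)}
    \<and> card (core G6 (generate G6 {x})) = 4
    \<and> card (core G6 (generate G6 {z})) = 4"
proof -
  have "G6\<lparr>carrier := H\<rparr> \<cong> SD16" "G6\<lparr>carrier := K\<rparr> \<cong> SD16"
    unfolding H_def K_def x_def y_def z_def w_def
    using G6.iso_SD16_if_card G6.x_order G6.y_order G6.y_conj_x G6.z_order G6.w_order G6.w_conj_z
      card_generate_x_y card_generate_z_w by simp_all
  then show ?thesis
    unfolding H_def K_def x_def y_def z_def w_def
    using group_G6 order_G6 G6_set_mult_eq_carrier generate_x_y_inter_z_w ord_G6_generators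
      G6.comm_x_z x_sq_mult_z_sq_ne_one core_generate_x core_generate_z card_generate_squares
    by simp
qed

end
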